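(* Consider a discounted MDP with finite state space $\mathcal{S}$, finite action space $\mathcal{A}$, reward vector $r$, transition matrix $P$ with $P_{sa,\tilde s}=\Pr(\tilde s\mid s,a)$, initial state distribution $\mu_0$ with full support, and discount $\gamma\in[0,1)$. Let $\theta\mapsto\pi_\theta$ be a differentiable parametrized policy with $\pi_\theta(s,a)>0$ for all $(s,a)$, and let the critic be directly parametrized by a vector $q\in\mathbb{R}^{|\mathcal{S}||\mathcal{A}|}$. Define the actor objective $J_\pi(\theta,q)=(1-\gamma)\mu_0^\top\Pi_\theta q$ and the on-policy critic objective $J_q(\theta,q)=\tfrac12(r-\Psi_\theta q)^\top D_\theta(r-\Psi_\theta q)$, where $\Psi_\theta=I-\gamma P\Pi_\theta$ and $D_\theta=\Delta(d_\theta)$. Define the Stackelberg gradient $$g_{S,\theta}=\partial_\theta J_\pi-(\partial_\theta\partial_q J_q)^\top(\partial_q^2 J_q)^{-1}(\partial_q J_\pi).$$ Then for every $q$, $$g_{S,\theta}=\partial_\theta J_\pi+\nabla_\theta\big(d_\theta^\top\delta_\theta\big)=\nabla_\theta J(\theta),$$ where $\delta_\theta=r-\Psi_\theta q$ (with $q$ held fixed) and $J(\theta)=(1-\gamma)\mu_0^\top\Pi_\theta q_\theta$ is the cumulative discounted reward objective.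
   Context: $\pi_\theta\in\mathbb{R}_+^{|\mathcal{S}||\mathcal{A}|}$ has entries $\pi_\theta(s,a)$, normalized in each state. $\Pi_\theta\in\mathbb{R}^{|\mathcal{S}|\times|\mathcal{S}||\mathcal{A}|}$ is block-diagonal with row $s$ containing $\pi_\theta(s,\cdot)^\top$, so $(\Pi_\theta v)(s)=\sum_a\pi_\theta(s,a)v(s,a)$. $q_\theta=\sum_{i\ge0}(\gamma P\Pi_\theta)^i r$. $d_\theta(s,a)=(1-\gamma)\sum_{i\ge0}\gamma^i\Pr(S_i=s,A_i=a)$ is the discounted state-action visitation distribution under $S_0\sim\mu_0$, policy $\pi_\theta$ and transitions $P$; $\Delta(v)$ is the diagonal matrix with diagonal $v$. Note $J_q$ depends on $\theta$ also through $D_\theta$. $\partial_q J_\pi$ and $\partial_q^2J_q$ are the gradient and Hessian in $q$; $\partial_\theta\partial_q J_q$ is the $|\mathcal{S}||\mathcal{A}|\times p$ matrix with entries $\partial^2 J_q/\partial q_{sa}\partial\theta_i$; $\partial_\theta J_\pi$ is the $\theta$-gradient at fixed $q$. *)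

theory Defs
  imports "HOL-Analysis.Analysis"
begin

text \<open>Vectors indexed by state-action pairs are elements of real^('s \<times> 'a);
  parameters are elements of real^'p.  The policy is a function
  pol :: real^'p \<Rightarrow> 's \<Rightarrow> 'a \<Rightarrow> real, transitions P s a s' = Pr(s' | s, a).\<close>

definition partial_deriv :: "(real^'n \<Rightarrow> real) \<Rightarrow> real^'n \<Rightarrow> 'n \<Rightarrow> real" where
  "partial_deriv f x i = deriv (\<lambda>t. f (x + t *\<^sub>R axis i 1)) 0"

definition pgrad :: "(real^'n \<Rightarrow> real) \<Rightarrow> real^'n \<Rightarrow> real^'n" where
  "pgrad f x = (\<chi> i. partial_deriv f x i)"

definition Pi_op :: "(real^'p \<Rightarrow> 's::finite \<Rightarrow> 'a::finite \<Rightarrow> real) \<Rightarrow> real^'p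
    \<Rightarrow> real^('s \<times> 'a) \<Rightarrow> 's \<Rightarrow> real" where
  "Pi_op pol \<theta> v s = (\<Sum>a\<in>UNIV. pol \<theta> s a * v $ (s, a))"

definition PPi :: "('s::finite \<Rightarrow> 'a::finite \<Rightarrow> 's \<Rightarrow> real) \<Rightarrow> (real^'p \<Rightarrow> 's \<Rightarrow> 'a \<Rightarrow> real)
    \<Rightarrow> real^'p \<Rightarrow> real^('s \<times> 'a) \<Rightarrow> real^('s \<times> 'a)" where
  "PPi P pol \<theta> v = (\<chi> sa. case sa of (s, a) \<Rightarrow> (\<Sum>s'\<in>UNIV. P s a s' * Pi_op pol \<theta> v s'))"

definition Psi :: "('s::finite \<Rightarrow> 'a::finite \<Rightarrow> 's \<Rightarrow> real) \<Rightarrow> (real^'p \<Rightarrow> 's \<Rightarrow> 'a \<Rightarrow> real)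
    \<Rightarrow> real \<Rightarrow> real^'p \<Rightarrow> real^('s \<times> 'a) \<Rightarrow> real^('s \<times> 'a)" where
  "Psi P pol \<gamma> \<theta> q = q - \<gamma> *\<^sub>R PPi P pol \<theta> q"

definition qpol :: "('s::finite \<Rightarrow> 'a::finite \<Rightarrow> 's \<Rightarrow> real) \<Rightarrow> (real^'p \<Rightarrow> 's \<Rightarrow> 'a \<Rightarrow> real)
    \<Rightarrow> real \<Rightarrow> real^('s \<times> 'a) \<Rightarrow> real^'p \<Rightarrow> real^('s \<times> 'a)" where
  "qpol P pol \<gamma> r \<theta> = (\<chi> sa. (\<Sum>i. (((\<lambda>v. \<gamma> *\<^sub>R PPi P pol \<theta> v) ^^ i) r) $ sa))"

text \<open>Pr(S_i = s, A_i = a) under S_0 ~ mu0, policy pi_theta, transitions P\<close>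
primrec sa_dist :: "('s::finite \<Rightarrow> real) \<Rightarrow> ('s \<Rightarrow> 'a::finite \<Rightarrow> 's \<Rightarrow> real)
    \<Rightarrow> (real^'p \<Rightarrow> 's \<Rightarrow> 'a \<Rightarrow> real) \<Rightarrow> real^'p \<Rightarrow> nat \<Rightarrow> 's \<times> 'a \<Rightarrow> real" where
  "sa_dist mu0 P pol \<theta> 0 = (\<lambda>(s, a). mu0 s * pol \<theta> s a)"
| "sa_dist mu0 P pol \<theta> (Suc i) =
     (\<lambda>(s', a'). (\<Sum>(s, a)\<in>UNIV. sa_dist mu0 P pol \<theta> i (s, a) * P s a s') * pol \<theta> s' a')"

definition dvis :: "('s::finite \<Rightarrow> real) \<Rightarrow> ('s \<Rightarrow> 'a::finite \<Rightarrow> 's \<Rightarrow> real)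
    \<Rightarrow> (real^'p \<Rightarrow> 's \<Rightarrow> 'a \<Rightarrow> real) \<Rightarrow> real \<Rightarrow> real^'p \<Rightarrow> 's \<times> 'a \<Rightarrow> real" where
  "dvis mu0 P pol \<gamma> \<theta> sa = (1 - \<gamma>) * (\<Sum>i. \<gamma> ^ i * sa_dist mu0 P pol \<theta> i sa)"

definition J_pi :: "('s::finite \<Rightarrow> real) \<Rightarrow> (real^'p \<Rightarrow> 's \<Rightarrow> 'a::finite \<Rightarrow> real) \<Rightarrow> real
    \<Rightarrow> real^'p \<Rightarrow> real^('s \<times> 'a) \<Rightarrow> real" where
  "J_pi mu0 pol \<gamma> \<theta> q = (1 - \<gamma>) * (\<Sum>s\<in>UNIV. mu0 s * Pi_op pol \<theta> q s)"

definition J_q :: "('s::finite \<Rightarrow> real) \<Rightarrow> ('s \<Rightarrow> 'a::finite \<Rightarrow> 's \<Rightarrow> real)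
    \<Rightarrow> (real^'p \<Rightarrow> 's \<Rightarrow> 'a \<Rightarrow> real) \<Rightarrow> real \<Rightarrow> real^('s \<times> 'a)
    \<Rightarrow> real^'p \<Rightarrow> real^('s \<times> 'a) \<Rightarrow> real" where
  "J_q mu0 P pol \<gamma> r \<theta> q =
     1/2 * (\<Sum>sa\<in>UNIV. dvis mu0 P pol \<gamma> \<theta> sa * (r $ sa - Psi P pol \<gamma> \<theta> q $ sa)^2)"

definition J_obj :: "('s::finite \<Rightarrow> real) \<Rightarrow> ('s \<Rightarrow> 'a::finite \<Rightarrow> 's \<Rightarrow> real)
    \<Rightarrow> (real^'p \<Rightarrow> 's \<Rightarrow> 'a \<Rightarrow> real) \<Rightarrow> real \<Rightarrow> real^('s \<times> 'a) \<Rightarrow> real^'p \<Rightarrow> real" where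
  "J_obj mu0 P pol \<gamma> r \<theta> = J_pi mu0 pol \<gamma> \<theta> (qpol P pol \<gamma> r \<theta>)"

definition stackelberg_grad :: "('s::finite \<Rightarrow> real) \<Rightarrow> ('s \<Rightarrow> 'a::finite \<Rightarrow> 's \<Rightarrow> real)
    \<Rightarrow> (real^'p::finite \<Rightarrow> 's \<Rightarrow> 'a \<Rightarrow> real) \<Rightarrow> real \<Rightarrow> real^('s \<times> 'a)
    \<Rightarrow> real^'p \<Rightarrow> real^('s \<times> 'a) \<Rightarrow> real^'p" where
  "stackelberg_grad mu0 P pol \<gamma> r \<theta> q =
    (let gth = pgrad (\<lambda>\<theta>'. J_pi mu0 pol \<gamma> \<theta>' q) \<theta>;
         gq = pgrad (\<lambda>q'. J_pi mu0 pol \<gamma> \<theta> q') q;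
         H = (\<chi> j k. partial_deriv (\<lambda>q'. partial_deriv (\<lambda>q''. J_q mu0 P pol \<gamma> r \<theta> q'') q' j) q k)
               :: real^('s \<times> 'a)^('s \<times> 'a);
         M = (\<chi> j i. partial_deriv (\<lambda>\<theta>'. partial_deriv (\<lambda>q'. J_q mu0 P pol \<gamma> r \<theta>' q') q j) \<theta> i)
               :: real^'p^('s \<times> 'a)
     in gth - transpose M *v (matrix_inv H *v gq))"

end

theory Submission
  imports Defs
begin

(* Write \<Psi> for the matrix of I - \<gamma> P \<Pi>\<^sub>\<theta>, d for the visitation vector and b = (1 - \<gamma>) \<mu>\<^sub>0 \<pi>\<^sub>\<theta>,
   which is the q-gradient of J\<^sub>\<pi>.  The visitation vector solves the flow equation \<Psi>^T d = b, and
   every row of \<Psi> sums to 1 - \<gamma>.  The critic Hessian is \<Psi>^T D \<Psi>, so it maps the constant vector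
   1/(1 - \<gamma>) to \<Psi>^T d = b.  Hence the Stackelberg correction is the \<theta>-gradient of 1/(1 - \<gamma>)
   times the sum of the entries of -\<partial>\<^sub>q J\<^sub>q = \<Psi>^T D \<delta>, which is d^T \<delta>.  Finally
   J\<^sub>\<pi>(\<theta>, v) = d^T \<Psi> v and \<Psi> q\<^sub>\<theta> = r give J(\<theta>) = d^T r = J\<^sub>\<pi>(\<theta>, q) + d^T \<delta>, and d depends
   differentiably on \<theta> by Cramer's rule. *)

lemma sum_UNIV_prod:
  fixes f :: "'s::finite \<times> 'a::finite \<Rightarrow> 'b::comm_monoid_add"
  shows "(\<Sum>k\<in>UNIV. f k) = (\<Sum>s\<in>UNIV. \<Sum>a\<in>UNIV. f (s, a))"
  by (simp add: UNIV_Times_UNIV[symmetric] sum.cartesian_product del: UNIV_Times_UNIV)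

lemma partial_deriv_eqI:
  assumes "\<And>t. f (x + t *\<^sub>R axis i 1) = g t" and "(g has_real_derivative D) (at 0)"
  shows "partial_deriv f x i = D"
proof -
  have "(\<lambda>t. f (x + t *\<^sub>R axis i 1)) = g" using assms(1) by auto
  then show ?thesis unfolding partial_deriv_def using DERIV_imp_deriv[OF assms(2)] by simp
qed

lemma partial_deriv_has_derivative:
  fixes f :: "real^'n \<Rightarrow> real"
  assumes "(f has_derivative f') (at x)"
  shows "partial_deriv f x i = f' (axis i 1)"
proof (rule partial_deriv_eqI[OF refl])
  have "((\<lambda>t. x + t *\<^sub>R axis i 1) has_derivative (\<lambda>t. t *\<^sub>R axis i 1)) (at 0)"
    by (auto intro!: derivative_eq_intros)
  moreover have "(f has_derivative f') (at (x + 0 *\<^sub>R axis i 1))"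
    using assms by simp
  ultimately have "((\<lambda>t. f (x + t *\<^sub>R axis i 1)) has_derivative (\<lambda>t. f' (t *\<^sub>R axis i 1))) (at 0)"
    by (rule has_derivative_compose)
  moreover have "(\<lambda>t. f' (t *\<^sub>R axis i 1)) = (\<lambda>t. f' (axis i 1) * t)"
    using linear_scale[OF has_derivative_linear[OF assms]] by (simp add: mult.commute)
  ultimately show "((\<lambda>t. f (x + t *\<^sub>R axis i 1)) has_real_derivative f' (axis i 1)) (at 0)"
    unfolding has_field_derivative_def by simp
qed

lemma has_derivative_pgrad:
  fixes f :: "real^'n \<Rightarrow> real"
  assumes "f differentiable (at x)"
  shows "(f has_derivative (\<lambda>h. pgrad f x \<bullet> h)) (at x)"
proof -
  obtain f' where f': "(f has_derivative f') (at x)"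
    using assms unfolding differentiable_def by blast
  have "f' = (\<lambda>h. pgrad f x \<bullet> h)"
  proof
    fix h
    have "f' h = f' (\<Sum>i\<in>UNIV. h $ i *\<^sub>R axis i 1)"
      by (simp add: basis_expansion flip: scalar_mult_eq_scaleR)
    also have "\<dots> = (\<Sum>i\<in>UNIV. h $ i * f' (axis i 1))"
      using has_derivative_linear[OF f'] by (simp add: linear_sum linear_scale)
    finally show "f' h = pgrad f x \<bullet> h"
      by (simp add: pgrad_def inner_vec_def partial_deriv_has_derivative[OF f'] mult.commute)
  qed
  then show ?thesis using f' by simp
qed

lemma pgrad_nth [simp]: "pgrad f x $ i = partial_deriv f x i"
  by (simp add: pgrad_def)

lemma pgrad_add:
  fixes f g :: "real^'n \<Rightarrow> real"
  assumes "f differentiable (at x)" and "g differentiable (at x)"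
  shows "pgrad (\<lambda>x. f x + g x) x = pgrad f x + pgrad g x"
proof -
  have "((\<lambda>x. f x + g x) has_derivative (\<lambda>h. pgrad f x \<bullet> h + pgrad g x \<bullet> h)) (at x)"
    using assms by (intro has_derivative_add has_derivative_pgrad)
  then show ?thesis
    by (simp add: vec_eq_iff partial_deriv_has_derivative inner_axis)
qed

lemma partial_deriv_sum:
  fixes f :: "'j \<Rightarrow> real^'n \<Rightarrow> real"
  assumes "\<And>j. j \<in> J \<Longrightarrow> f j differentiable (at x)"
  shows "partial_deriv (\<lambda>x. \<Sum>j\<in>J. f j x) x i = (\<Sum>j\<in>J. partial_deriv (f j) x i)"
proof -
  have "((\<lambda>x. \<Sum>j\<in>J. f j x) has_derivative (\<lambda>h. \<Sum>j\<in>J. pgrad (f j) x \<bullet> h)) (at x)"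
    using assms by (intro has_derivative_sum has_derivative_pgrad)
  then show ?thesis
    by (simp add: partial_deriv_has_derivative inner_axis)
qed

lemma partial_deriv_cmult:
  fixes f :: "real^'n \<Rightarrow> real"
  assumes "f differentiable (at x)"
  shows "partial_deriv (\<lambda>x. c * f x) x i = c * partial_deriv f x i"
proof -
  have "((\<lambda>x. c * f x) has_derivative (\<lambda>h. c * (pgrad f x \<bullet> h))) (at x)"
    using assms by (intro has_derivative_mult_right has_derivative_pgrad)
  then show ?thesis
    by (simp add: partial_deriv_has_derivative inner_axis)
qed

lemma differentiable_prod:
  fixes f :: "'i \<Rightarrow> 'x::real_normed_vector \<Rightarrow> 'b::real_normed_field"
  assumes "\<And>i. i \<in> I \<Longrightarrow> f i differentiable (at x)"
  shows "(\<lambda>x. \<Prod>i\<in>I. f i x) differentiable (at x)"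
proof -
  obtain f' where "\<And>i. i \<in> I \<Longrightarrow> (f i has_derivative f' i) (at x)"
    using assms unfolding differentiable_def by metis
  then show ?thesis
    unfolding differentiable_def by (blast intro: has_derivative_prod)
qed

lemma det_differentiable:
  fixes A :: "'x::real_normed_vector \<Rightarrow> real^'n^'n"
  assumes "\<And>i j. (\<lambda>t. A t $ i $ j) differentiable (at x)"
  shows "(\<lambda>t. det (A t)) differentiable (at x)"
  unfolding det_def
  by (intro differentiable_sum differentiable_mult differentiable_prod ballI assms
      differentiable_const) simp

lemma matrix_inv_mult_eqI:
  fixes A :: "real^'n^'n"
  assumes "invertible A" and "A *v x = b"
  shows "matrix_inv A *v b = x"
proof -
  have "matrix_inv A ** A = mat 1"
    using assms(1) unfolding invertible_def matrix_inv_def by (rule someI2_ex) auto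
  then show ?thesis
    by (metis assms(2) matrix_vector_mul_assoc matrix_vector_mul_lid)
qed

definition diagonal_matrix :: "real^'n \<Rightarrow> real^'n^'n" where
  "diagonal_matrix w = (\<chi> i j. if i = j then w $ i else 0)"

lemma invertible_diagonal_matrix:
  assumes "\<And>i. w $ i \<noteq> 0"
  shows "invertible (diagonal_matrix w)"
proof -
  have "det (diagonal_matrix w) = (\<Prod>i\<in>UNIV. w $ i)"
    by (subst det_diagonal) (auto simp: diagonal_matrix_def)
  then show ?thesis
    using assms by (simp add: invertible_det_nz)
qed

lemma diagonal_matrix_mult_vec: "diagonal_matrix w *v v = (\<chi> i. w $ i * v $ i)"
  by (simp add: vec_eq_iff matrix_vector_mult_def diagonal_matrix_def if_distrib[of "\<lambda>x. x * _"]
      cong: if_cong)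

lemma transpose_diagonal_mult_nth:
  "(transpose A ** diagonal_matrix w ** A) $ j $ k = (\<Sum>l\<in>UNIV. w $ l * A $ l $ j * A $ l $ k)"
  by (simp add: matrix_matrix_mult_def diagonal_matrix_def transpose_def if_distrib[of "\<lambda>x. x * _"]
      if_distrib[of "\<lambda>x. _ * x"] cong: if_cong) (simp add: ac_simps)

definition PPi_matrix :: "('s::finite \<Rightarrow> 'a::finite \<Rightarrow> 's \<Rightarrow> real) \<Rightarrow> (real^'p \<Rightarrow> 's \<Rightarrow> 'a \<Rightarrow> real)
    \<Rightarrow> real^'p \<Rightarrow> real^('s \<times> 'a)^('s \<times> 'a)" where
  "PPi_matrix P pol \<theta> = (\<chi> k l. P (fst k) (snd k) (fst l) * pol \<theta> (fst l) (snd l))"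

definition Psi_matrix :: "('s::finite \<Rightarrow> 'a::finite \<Rightarrow> 's \<Rightarrow> real) \<Rightarrow> (real^'p \<Rightarrow> 's \<Rightarrow> 'a \<Rightarrow> real)
    \<Rightarrow> real \<Rightarrow> real^'p \<Rightarrow> real^('s \<times> 'a)^('s \<times> 'a)" where
  "Psi_matrix P pol \<gamma> \<theta> = mat 1 - \<gamma> *\<^sub>R PPi_matrix P pol \<theta>"

definition start_weights :: "('s::finite \<Rightarrow> real) \<Rightarrow> (real^'p \<Rightarrow> 's \<Rightarrow> 'a::finite \<Rightarrow> real)
    \<Rightarrow> real \<Rightarrow> real^'p \<Rightarrow> real^('s \<times> 'a)" where
  "start_weights mu0 pol \<gamma> \<theta> = (\<chi> k. (1 - \<gamma>) * mu0 (fst k) * pol \<theta> (fst k) (snd k))"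

lemma PPi_eq_matrix: "PPi P pol \<theta> v = PPi_matrix P pol \<theta> *v v"
proof -
  have "PPi P pol \<theta> v $ (s, a) = (PPi_matrix P pol \<theta> *v v) $ (s, a)" for s a
    unfolding PPi_def Pi_op_def PPi_matrix_def matrix_vector_mult_def
    by (simp add: sum_UNIV_prod sum_distrib_left mult.assoc)
  then show ?thesis by (simp add: vec_eq_iff)
qed

lemma Psi_eq_matrix: "Psi P pol \<gamma> \<theta> v = Psi_matrix P pol \<gamma> \<theta> *v v"
  by (simp add: Psi_def Psi_matrix_def PPi_eq_matrix matrix_vector_mult_diff_rdistrib
      scaleR_matrix_vector_assoc)

lemma Psi_axis_shift:
  "Psi P pol \<gamma> \<theta> (v + t *\<^sub>R axis j 1) $ l = Psi P pol \<gamma> \<theta> v $ l + t * Psi_matrix P pol \<gamma> \<theta> $ l $ j"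
  by (simp add: Psi_eq_matrix matrix_vector_right_distrib matrix_vector_mult_scaleR
      matrix_vector_mult_basis column_def)

lemma J_pi_eq_inner: "J_pi mu0 pol \<gamma> \<theta> v = start_weights mu0 pol \<gamma> \<theta> \<bullet> v"
  unfolding J_pi_def Pi_op_def start_weights_def inner_vec_def
  by (subst sum_UNIV_prod) (simp add: sum_distrib_left mult.assoc)

lemma pgrad_J_pi_q: "pgrad (J_pi mu0 pol \<gamma> \<theta>) q = start_weights mu0 pol \<gamma> \<theta>"
proof -
  have "(J_pi mu0 pol \<gamma> \<theta> has_derivative (\<lambda>h. start_weights mu0 pol \<gamma> \<theta> \<bullet> h)) (at q)"
    unfolding J_pi_eq_inner[abs_def]
    by (intro bounded_linear_imp_has_derivative bounded_linear_inner_right)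
  then show ?thesis
    by (simp add: vec_eq_iff partial_deriv_has_derivative inner_axis)
qed

lemma has_real_derivative_weighted_squares:
  fixes w a c :: "'k::finite \<Rightarrow> real"
  shows "((\<lambda>t. 1/2 * (\<Sum>l\<in>UNIV. w l * (a l - t * c l)\<^sup>2)) has_real_derivative
     - (\<Sum>l\<in>UNIV. w l * a l * c l)) (at 0)"
  by (auto intro!: derivative_eq_intros simp: sum_negf[symmetric] sum_distrib_left algebra_simps)

lemma has_real_derivative_weighted_residuals:
  fixes w a b c :: "'k::finite \<Rightarrow> real"
  shows "((\<lambda>t. - (\<Sum>l\<in>UNIV. w l * (a l - t * c l) * b l)) has_real_derivative
     (\<Sum>l\<in>UNIV. w l * c l * b l)) (at 0)"
  by (auto intro!: derivative_eq_intros simp: sum_negf[symmetric] sum_distrib_left algebra_simps)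

lemma J_q_partial_q:
  "partial_deriv (J_q mu0 P pol \<gamma> r \<theta>) q j =
     - (\<Sum>l\<in>UNIV. dvis mu0 P pol \<gamma> \<theta> l * (r $ l - Psi P pol \<gamma> \<theta> q $ l)
          * Psi_matrix P pol \<gamma> \<theta> $ l $ j)"
proof (rule partial_deriv_eqI[OF _ has_real_derivative_weighted_squares])
  fix t
  show "J_q mu0 P pol \<gamma> r \<theta> (q + t *\<^sub>R axis j 1) = 1/2 * (\<Sum>l\<in>UNIV.
      dvis mu0 P pol \<gamma> \<theta> l * ((r $ l - Psi P pol \<gamma> \<theta> q $ l) - t * Psi_matrix P pol \<gamma> \<theta> $ l $ j)\<^sup>2)"
    unfolding J_q_def Psi_axis_shift by (simp add: algebra_simps)
qed

lemma J_q_partial_qq: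
  "partial_deriv (\<lambda>q'. partial_deriv (J_q mu0 P pol \<gamma> r \<theta>) q' j) q k =
     (\<Sum>l\<in>UNIV. dvis mu0 P pol \<gamma> \<theta> l * Psi_matrix P pol \<gamma> \<theta> $ l $ k * Psi_matrix P pol \<gamma> \<theta> $ l $ j)"
proof (rule partial_deriv_eqI[OF _ has_real_derivative_weighted_residuals])
  fix t
  show "partial_deriv (J_q mu0 P pol \<gamma> r \<theta>) (q + t *\<^sub>R axis k 1) j = - (\<Sum>l\<in>UNIV.
      dvis mu0 P pol \<gamma> \<theta> l * ((r $ l - Psi P pol \<gamma> \<theta> q $ l) - t * Psi_matrix P pol \<gamma> \<theta> $ l $ k)
        * Psi_matrix P pol \<gamma> \<theta> $ l $ j)"
    unfolding J_q_partial_q Psi_axis_shift by (simp add: algebra_simps)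
qed

lemma sa_dist_0: "sa_dist mu0 P pol \<theta> 0 k = mu0 (fst k) * pol \<theta> (fst k) (snd k)"
  by (cases k) (simp only: sa_dist.simps case_prod_beta)

lemma sa_dist_Suc:
  "sa_dist mu0 P pol \<theta> (Suc i) k = (\<Sum>l\<in>UNIV. sa_dist mu0 P pol \<theta> i l * PPi_matrix P pol \<theta> $ l $ k)"
  by (cases k) (simp add: PPi_matrix_def case_prod_beta' sum_distrib_right mult.assoc)

declare sa_dist.simps [simp del]

locale finite_mdp =
  fixes P :: "'s::finite \<Rightarrow> 'a::finite \<Rightarrow> 's \<Rightarrow> real"
    and mu0 :: "'s \<Rightarrow> real"
    and \<gamma> :: real
    and pol :: "real^'p::finite \<Rightarrow> 's \<Rightarrow> 'a \<Rightarrow> real"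
  assumes P_nonneg: "\<And>s a s'. P s a s' \<ge> 0"
    and P_stoch: "\<And>s a. (\<Sum>s'\<in>UNIV. P s a s') = 1"
    and mu0_pos: "\<And>s. mu0 s > 0"
    and mu0_sum: "(\<Sum>s\<in>UNIV. mu0 s) = 1"
    and gamma: "0 \<le> \<gamma>" "\<gamma> < 1"
    and pi_pos: "\<And>\<theta>' s a. pol \<theta>' s a > 0"
    and pi_sum: "\<And>\<theta>' s. (\<Sum>a\<in>UNIV. pol \<theta>' s a) = 1"
    and pi_diff: "\<And>\<theta>' s a. (\<lambda>t. pol t s a) differentiable (at \<theta>')"
begin

lemma PPi_matrix_nonneg: "0 \<le> PPi_matrix P pol \<theta> $ k $ l"
  by (simp add: PPi_matrix_def P_nonneg less_imp_le[OF pi_pos])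

lemma PPi_matrix_row_sum: "(\<Sum>l\<in>UNIV. PPi_matrix P pol \<theta> $ k $ l) = 1"
  unfolding PPi_matrix_def
  by (simp add: sum_UNIV_prod[where f = "\<lambda>l. P (fst k) (snd k) (fst l) * pol \<theta> (fst l) (snd l)"]
      sum_distrib_left[symmetric] pi_sum P_stoch)

lemma PPi_abs_le:
  assumes "\<And>l. \<bar>v $ l\<bar> \<le> m"
  shows "\<bar>PPi P pol \<theta> v $ k\<bar> \<le> m"
proof -
  let ?M = "PPi_matrix P pol \<theta>"
  have "\<bar>PPi P pol \<theta> v $ k\<bar> \<le> (\<Sum>l\<in>UNIV. ?M $ k $ l * \<bar>v $ l\<bar>)"
    unfolding PPi_eq_matrix matrix_vector_mult_def
    using sum_abs[of "\<lambda>l. ?M $ k $ l * v $ l" UNIV]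
    by (simp add: abs_mult abs_of_nonneg[OF PPi_matrix_nonneg])
  also have "\<dots> \<le> (\<Sum>l\<in>UNIV. ?M $ k $ l * m)"
    by (intro sum_mono mult_left_mono assms PPi_matrix_nonneg)
  also have "\<dots> = m"
    by (simp add: PPi_matrix_row_sum flip: sum_distrib_right)
  finally show ?thesis .
qed

lemma Psi_matrix_row_sum: "(\<Sum>l\<in>UNIV. Psi_matrix P pol \<gamma> \<theta> $ k $ l) = 1 - \<gamma>"
  by (simp add: Psi_matrix_def mat_def sum_subtractf PPi_matrix_row_sum
      flip: sum_distrib_left)

text \<open>Injectivity of \<Psi> is the contraction property of \<gamma> P \<Pi> in the maximum norm.\<close>
lemma Psi_matrix_invertible: "invertible (Psi_matrix P pol \<gamma> \<theta>)"
proof -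
  have "v = 0" if "Psi_matrix P pol \<gamma> \<theta> *v v = 0" for v
  proof -
    define m where "m = Max (range (\<lambda>l. \<bar>v $ l\<bar>))"
    have m: "\<bar>v $ l\<bar> \<le> m" for l
      unfolding m_def by (rule Max_ge) auto
    have "m \<in> range (\<lambda>l. \<bar>v $ l\<bar>)"
      unfolding m_def by (rule Max_in) auto
    then obtain l0 where l0: "m = \<bar>v $ l0\<bar>"
      by blast
    have "Psi P pol \<gamma> \<theta> v $ l = 0" for l
      using that by (simp flip: Psi_eq_matrix)
    then have fixpoint: "v $ l = \<gamma> * PPi P pol \<theta> v $ l" for l
      by (simp add: Psi_def)
    have "m = \<gamma> * \<bar>PPi P pol \<theta> v $ l0\<bar>"
      using gamma by (simp add: l0 fixpoint abs_mult)
    also have "\<dots> \<le> \<gamma> * m"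
      using gamma by (intro mult_left_mono PPi_abs_le m)
    finally have "(1 - \<gamma>) * m \<le> 0"
      by (simp add: algebra_simps)
    then have "m \<le> 0"
      using gamma by (simp add: mult_le_0_iff)
    then have "\<bar>v $ l\<bar> \<le> 0" for l
      using m[of l] by linarith
    then show "v = 0"
      by (simp add: vec_eq_iff)
  qed
  then show ?thesis
    using matrix_left_invertible_ker invertible_left_inverse by blast
qed

lemma Bellman_iterate_abs_le:
  "\<bar>(((\<lambda>v. \<gamma> *\<^sub>R PPi P pol \<theta> v) ^^ i) r) $ k\<bar> \<le> \<gamma> ^ i * (\<Sum>l\<in>UNIV. \<bar>r $ l\<bar>)"
proof (induction i arbitrary: k)
  case 0
  show ?case
    using member_le_sum[of k UNIV "\<lambda>l. \<bar>r $ l\<bar>"] by simp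
next
  case (Suc i)
  then have "\<bar>PPi P pol \<theta> (((\<lambda>v. \<gamma> *\<^sub>R PPi P pol \<theta> v) ^^ i) r) $ k\<bar> \<le> \<gamma> ^ i * (\<Sum>l\<in>UNIV. \<bar>r $ l\<bar>)"
    by (intro PPi_abs_le)
  then show ?case
    using gamma by (simp add: abs_mult mult.assoc mult_left_mono)
qed

lemma Bellman_iterates_summable: "summable (\<lambda>i. (((\<lambda>v. \<gamma> *\<^sub>R PPi P pol \<theta> v) ^^ i) r) $ k)"
proof (rule summable_comparison_test')
  show "summable (\<lambda>i. \<gamma> ^ i * (\<Sum>l\<in>UNIV. \<bar>r $ l\<bar>))"
    using gamma by (intro summable_mult2 summable_geometric) simp
qed (simp add: Bellman_iterate_abs_le)

lemma Psi_qpol: "Psi P pol \<gamma> \<theta> (qpol P pol \<gamma> r \<theta>) = r"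
proof -
  let ?M = "PPi_matrix P pol \<theta>"
  define X where "X i = ((\<lambda>v. \<gamma> *\<^sub>R PPi P pol \<theta> v) ^^ i) r" for i
  have X_Suc: "X (Suc i) $ k = (\<Sum>l\<in>UNIV. \<gamma> * ?M $ k $ l * X i $ l)" for i k
    by (simp add: X_def PPi_eq_matrix matrix_vector_mult_def sum_distrib_left mult.assoc)
  have summable: "summable (\<lambda>i. X i $ l)" for l
    unfolding X_def by (rule Bellman_iterates_summable)
  have qpol: "qpol P pol \<gamma> r \<theta> = (\<chi> k. \<Sum>i. X i $ k)"
    unfolding qpol_def X_def ..
  have "(\<Sum>l\<in>UNIV. \<gamma> * ?M $ k $ l * (\<Sum>i. X i $ l)) = (\<Sum>i. X (Suc i) $ k)" for k
    unfolding X_Suc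
    by (simp add: suminf_mult summable suminf_sum summable_mult)
  then have "Psi P pol \<gamma> \<theta> (qpol P pol \<gamma> r \<theta>) $ k = X 0 $ k" for k
    using suminf_split_head[OF summable[of k]]
    by (simp add: Psi_def PPi_eq_matrix qpol matrix_vector_mult_def sum_distrib_left mult.assoc)
  then show ?thesis
    by (simp add: vec_eq_iff X_def)
qed

lemma sa_dist_nonneg: "0 \<le> sa_dist mu0 P pol \<theta> i k"
proof (induction i arbitrary: k)
  case 0
  then show ?case by (simp add: sa_dist_0 less_imp_le[OF mu0_pos] less_imp_le[OF pi_pos])
next
  case (Suc i)
  then show ?case by (simp add: sa_dist_Suc sum_nonneg PPi_matrix_nonneg)
qed

lemma sa_dist_sum: "(\<Sum>k\<in>UNIV. sa_dist mu0 P pol \<theta> i k) = 1"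
proof (induction i)
  case 0
  then show ?case
    by (simp add: sa_dist_0 sum_UNIV_prod[where f = "\<lambda>k. mu0 (fst k) * pol \<theta> (fst k) (snd k)"]
        pi_sum mu0_sum flip: sum_distrib_left)
next
  case (Suc i)
  then show ?case
    unfolding sa_dist_Suc by (subst sum.swap) (simp add: PPi_matrix_row_sum flip: sum_distrib_left)
qed

lemma sa_dist_le_1: "sa_dist mu0 P pol \<theta> i k \<le> 1"
  using member_le_sum[of k UNIV "sa_dist mu0 P pol \<theta> i"] by (simp add: sa_dist_nonneg sa_dist_sum)

lemma summable_discounted_sa_dist: "summable (\<lambda>i. \<gamma> ^ i * sa_dist mu0 P pol \<theta> (f i) k)"
proof (rule summable_comparison_test'[of "\<lambda>i. \<gamma> ^ i"])
  show "summable (\<lambda>i. \<gamma> ^ i)"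
    using gamma by (simp add: summable_geometric)
  show "norm (\<gamma> ^ i * sa_dist mu0 P pol \<theta> (f i) k) \<le> \<gamma> ^ i" for i
    using gamma sa_dist_nonneg sa_dist_le_1 by (simp add: abs_mult mult_left_le)
qed

lemma dvis_pos: "dvis mu0 P pol \<gamma> \<theta> k > 0"
proof -
  have "0 < (\<Sum>i. \<gamma> ^ i * sa_dist mu0 P pol \<theta> i k)"
    using summable_discounted_sa_dist[where f = "\<lambda>i. i"]
    by (intro suminf_pos2[of _ 0]) (auto simp: sa_dist_nonneg gamma sa_dist_0 mu0_pos pi_pos)
  then show ?thesis
    unfolding dvis_def using gamma by simp
qed

definition visit :: "real^'p \<Rightarrow> real^('s \<times> 'a)" where
  "visit \<theta> = (\<chi> k. dvis mu0 P pol \<gamma> \<theta> k)"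

text \<open>Multiplying the recursion of sa_dist by \<gamma> shifts the series defining d by one step.\<close>
lemma visit_flow: "visit \<theta> v* Psi_matrix P pol \<gamma> \<theta> = start_weights mu0 pol \<gamma> \<theta>"
proof -
  let ?\<rho> = "sa_dist mu0 P pol \<theta>" and ?M = "PPi_matrix P pol \<theta>"
  have summable: "summable (\<lambda>i. \<gamma> ^ i * ?\<rho> (f i) l)" for f l
    by (rule summable_discounted_sa_dist)
  have "(visit \<theta> v* Psi_matrix P pol \<gamma> \<theta>) $ k = start_weights mu0 pol \<gamma> \<theta> $ k" for k
  proof -
    have "(\<Sum>l\<in>UNIV. dvis mu0 P pol \<gamma> \<theta> l * ?M $ l $ k)
        = (1 - \<gamma>) * (\<Sum>l\<in>UNIV. \<Sum>i. \<gamma> ^ i * ?\<rho> i l * ?M $ l $ k)"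
      unfolding dvis_def using summable[of "\<lambda>i. i"]
      by (simp add: mult.assoc suminf_mult2 flip: sum_distrib_left)
    also have "\<dots> = (1 - \<gamma>) * (\<Sum>i. \<Sum>l\<in>UNIV. \<gamma> ^ i * ?\<rho> i l * ?M $ l $ k)"
      using summable[of "\<lambda>i. i"] by (subst suminf_sum) (auto intro: summable_mult2)
    also have "\<dots> = (1 - \<gamma>) * (\<Sum>i. \<gamma> ^ i * ?\<rho> (Suc i) k)"
      by (simp add: sa_dist_Suc sum_distrib_left mult.assoc)
    finally have "\<gamma> * (\<Sum>l\<in>UNIV. dvis mu0 P pol \<gamma> \<theta> l * ?M $ l $ k)
        = (1 - \<gamma>) * (\<Sum>i. \<gamma> ^ Suc i * ?\<rho> (Suc i) k)"
      using summable[of Suc] by (simp add: suminf_mult mult.assoc mult.left_commute)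
    also have "\<dots> = dvis mu0 P pol \<gamma> \<theta> k - (1 - \<gamma>) * ?\<rho> 0 k"
      unfolding dvis_def suminf_split_head[OF summable[of "\<lambda>i. i" k]]
      by (simp add: algebra_simps)
    finally show ?thesis
      by (simp add: vector_matrix_mult_def Psi_matrix_def mat_def visit_def start_weights_def
          sa_dist_0 algebra_simps sum_subtractf sum_distrib_left if_distrib[of "\<lambda>x. x * _"]
          cong: if_cong)
  qed
  then show ?thesis
    by (simp add: vec_eq_iff)
qed

lemma J_pi_eq_visit: "J_pi mu0 pol \<gamma> \<theta> v = visit \<theta> \<bullet> Psi P pol \<gamma> \<theta> v"
  by (simp add: J_pi_eq_inner Psi_eq_matrix flip: visit_flow dot_lmul_matrix)

lemma J_obj_eq_visit: "J_obj mu0 P pol \<gamma> r \<theta> = visit \<theta> \<bullet> r"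
  by (simp add: J_obj_def J_pi_eq_visit Psi_qpol)

definition mean_td_error :: "real^('s \<times> 'a) \<Rightarrow> real^('s \<times> 'a) \<Rightarrow> real^'p \<Rightarrow> real" where
  "mean_td_error r q \<theta> = (\<Sum>l\<in>UNIV. dvis mu0 P pol \<gamma> \<theta> l * (r $ l - Psi P pol \<gamma> \<theta> q $ l))"

lemma J_obj_eq_J_pi_plus_mean_td_error:
  "J_obj mu0 P pol \<gamma> r \<theta> = J_pi mu0 pol \<gamma> \<theta> q + mean_td_error r q \<theta>"
  by (simp add: J_obj_eq_visit J_pi_eq_visit mean_td_error_def inner_vec_def visit_def
      right_diff_distrib sum_subtractf)

lemma PPi_matrix_differentiable: "(\<lambda>\<theta>. PPi_matrix P pol \<theta> $ k $ l) differentiable (at \<theta>)"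
  by (simp add: PPi_matrix_def pi_diff)

lemma Psi_matrix_differentiable: "(\<lambda>\<theta>. Psi_matrix P pol \<gamma> \<theta> $ k $ l) differentiable (at \<theta>)"
  by (simp add: Psi_matrix_def PPi_matrix_differentiable)

lemma Psi_differentiable: "(\<lambda>\<theta>. Psi P pol \<gamma> \<theta> v $ l) differentiable (at \<theta>)"
  by (simp add: Psi_eq_matrix matrix_vector_mult_def Psi_matrix_differentiable)

lemma J_pi_differentiable: "(\<lambda>\<theta>. J_pi mu0 pol \<gamma> \<theta> v) differentiable (at \<theta>)"
  by (simp add: J_pi_eq_inner inner_vec_def start_weights_def pi_diff)

text \<open>Cramer's rule writes the solution d of \<Psi>^T d = b as a quotient of determinants.\<close>
lemma dvis_differentiable: "(\<lambda>\<theta>. dvis mu0 P pol \<gamma> \<theta> k) differentiable (at \<theta>)"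
proof -
  let ?A = "\<lambda>\<theta>. transpose (Psi_matrix P pol \<gamma> \<theta>)"
  let ?N = "\<lambda>\<theta> k. det (\<chi> i j. if j = k then start_weights mu0 pol \<gamma> \<theta> $ i else ?A \<theta> $ i $ j)"
  have det: "det (?A \<theta>') \<noteq> 0" for \<theta>'
    using Psi_matrix_invertible invertible_det_nz transpose_invertible by blast
  have "?A \<theta>' *v visit \<theta>' = start_weights mu0 pol \<gamma> \<theta>'" for \<theta>'
    by (simp add: visit_flow)
  then have visit: "visit \<theta>' = (\<chi> k. ?N \<theta>' k / det (?A \<theta>'))" for \<theta>'
    by (rule cramer[OF det, THEN iffD1])
  have "dvis mu0 P pol \<gamma> \<theta>' k = ?N \<theta>' k / det (?A \<theta>')" for \<theta>'
    using arg_cong[OF visit[of \<theta>'], of "\<lambda>v. v $ k"] by (simp only: visit_def vec_lambda_beta)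
  then have dvis: "(\<lambda>\<theta>. dvis mu0 P pol \<gamma> \<theta> k) = (\<lambda>\<theta>. ?N \<theta> k / det (?A \<theta>))"
    by (rule ext)
  have "(\<lambda>\<theta>. ?N \<theta> k) differentiable (at \<theta>)"
  proof (rule det_differentiable)
    fix i j
    show "(\<lambda>\<theta>. (\<chi> i j. if j = k then start_weights mu0 pol \<gamma> \<theta> $ i else ?A \<theta> $ i $ j) $ i $ j)
        differentiable (at \<theta>)"
      by (cases "j = k")
        (simp_all add: start_weights_def transpose_def pi_diff Psi_matrix_differentiable)
  qed
  moreover have "(\<lambda>\<theta>. det (?A \<theta>)) differentiable (at \<theta>)"
    by (intro det_differentiable) (simp add: transpose_def Psi_matrix_differentiable)
  ultimately show ?thesis
    unfolding dvis using det[of \<theta>] by (rule differentiable_divide)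
qed

lemma mean_td_error_differentiable: "mean_td_error r q differentiable (at \<theta>)"
  unfolding mean_td_error_def[abs_def]
  by (simp add: dvis_differentiable Psi_differentiable)

definition critic_hessian :: "real^'p \<Rightarrow> real^('s \<times> 'a)^('s \<times> 'a)" where
  "critic_hessian \<theta> =
     transpose (Psi_matrix P pol \<gamma> \<theta>) ** diagonal_matrix (visit \<theta>) ** Psi_matrix P pol \<gamma> \<theta>"

lemma critic_hessian_eq:
  "(\<chi> j k. partial_deriv (\<lambda>q'. partial_deriv (J_q mu0 P pol \<gamma> r \<theta>) q' j) q k) = critic_hessian \<theta>"
  by (simp add: vec_eq_iff J_q_partial_qq critic_hessian_def transpose_diagonal_mult_nth visit_def
      ac_simps)

lemma critic_hessian_invertible: "invertible (critic_hessian \<theta>)"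
  unfolding critic_hessian_def using dvis_pos
  by (intro invertible_mult transpose_invertible Psi_matrix_invertible invertible_diagonal_matrix)
    (simp add: visit_def less_imp_neq[symmetric])

text \<open>The rows of \<Psi> sum to 1 - \<gamma>, so the constant vector 1/(1 - \<gamma>) is mapped to \<Psi>^T d = b.\<close>
lemma critic_hessian_solve: "critic_hessian \<theta> *v (\<chi> _. 1 / (1 - \<gamma>)) = start_weights mu0 pol \<gamma> \<theta>"
proof -
  have "Psi_matrix P pol \<gamma> \<theta> *v (\<chi> _. 1 / (1 - \<gamma>)) = (\<chi> _. 1)"
    using gamma
    by (simp add: vec_eq_iff matrix_vector_mult_def Psi_matrix_row_sum flip: sum_divide_distrib)
  then show ?thesis
    by (simp add: critic_hessian_def diagonal_matrix_mult_vec visit_flow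
        flip: matrix_vector_mul_assoc)
qed

lemma critic_mixed_partial:
  "transpose ((\<chi> j i. partial_deriv (\<lambda>\<theta>'. partial_deriv (J_q mu0 P pol \<gamma> r \<theta>') q j) \<theta> i)
      :: real^'p^('s \<times> 'a)) *v (\<chi> _. 1 / (1 - \<gamma>))
     = - pgrad (mean_td_error r q) \<theta>"
proof -
  let ?f = "\<lambda>j \<theta>'. partial_deriv (J_q mu0 P pol \<gamma> r \<theta>') q j"
  have f_differentiable: "?f j differentiable (at \<theta>)" for j
    unfolding J_q_partial_q
    by (simp add: dvis_differentiable Psi_differentiable Psi_matrix_differentiable)
  have "(\<Sum>j\<in>UNIV. ?f j \<theta>') = - (1 - \<gamma>) * mean_td_error r q \<theta>'" for \<theta>'
  proof -
    have "(\<Sum>j\<in>UNIV. ?f j \<theta>') = - (\<Sum>l\<in>UNIV. dvis mu0 P pol \<gamma> \<theta>' l * (r $ l - Psi P pol \<gamma> \<theta>' q $ l)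
        * (\<Sum>j\<in>UNIV. Psi_matrix P pol \<gamma> \<theta>' $ l $ j))"
      unfolding J_q_partial_q sum_negf by (subst sum.swap) (simp add: sum_distrib_left)
    also have "\<dots> = - (\<Sum>l\<in>UNIV. (1 - \<gamma>) * (dvis mu0 P pol \<gamma> \<theta>' l * (r $ l - Psi P pol \<gamma> \<theta>' q $ l)))"
      by (simp add: Psi_matrix_row_sum mult.commute)
    finally show ?thesis
      by (simp only: mean_td_error_def sum_distrib_left mult_minus_left sum_negf)
  qed
  then have "(\<Sum>j\<in>UNIV. partial_deriv (?f j) \<theta> i)
      = - (1 - \<gamma>) * partial_deriv (mean_td_error r q) \<theta> i" for i
    using partial_deriv_sum[of UNIV ?f \<theta> i] f_differentiable mean_td_error_differentiable
      partial_deriv_cmult[of "mean_td_error r q" \<theta> "- (1 - \<gamma>)" i]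
    by simp
  then show ?thesis
    using gamma
    by (simp add: vec_eq_iff matrix_vector_mult_def transpose_def field_simps
        flip: sum_divide_distrib)
qed

lemma stackelberg_grad_eq:
  "stackelberg_grad mu0 P pol \<gamma> r \<theta> q
     = pgrad (\<lambda>\<theta>'. J_pi mu0 pol \<gamma> \<theta>' q) \<theta> + pgrad (mean_td_error r q) \<theta>"
proof -
  have hessian_inverse:
    "matrix_inv (critic_hessian \<theta>) *v start_weights mu0 pol \<gamma> \<theta> = (\<chi> _. 1 / (1 - \<gamma>))"
    by (rule matrix_inv_mult_eqI[OF critic_hessian_invertible critic_hessian_solve])
  show ?thesis
    unfolding stackelberg_grad_def Let_def pgrad_J_pi_q critic_hessian_eq hessian_inverse
      critic_mixed_partial
    by simp
qed

end

theorem theorem3: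
  fixes P :: "'s::finite \<Rightarrow> 'a::finite \<Rightarrow> 's \<Rightarrow> real"
    and mu0 :: "'s \<Rightarrow> real"
    and r :: "real^('s \<times> 'a)"
    and \<gamma> :: real
    and pol :: "real^'p::finite \<Rightarrow> 's \<Rightarrow> 'a \<Rightarrow> real"
    and \<theta> :: "real^'p"
    and q :: "real^('s \<times> 'a)"
  assumes P_nonneg: "\<And>s a s'. P s a s' \<ge> 0"
    and P_stoch: "\<And>s a. (\<Sum>s'\<in>UNIV. P s a s') = 1"
    and mu0_pos: "\<And>s. mu0 s > 0"
    and mu0_sum: "(\<Sum>s\<in>UNIV. mu0 s) = 1"
    and gamma: "0 \<le> \<gamma>" "\<gamma> < 1"
    and pi_pos: "\<And>\<theta>' s a. pol \<theta>' s a > 0"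
    and pi_sum: "\<And>\<theta>' s. (\<Sum>a\<in>UNIV. pol \<theta>' s a) = 1"
    and pi_diff: "\<And>\<theta>' s a. (\<lambda>t. pol t s a) differentiable (at \<theta>')"
  shows "stackelberg_grad mu0 P pol \<gamma> r \<theta> q =
           pgrad (\<lambda>\<theta>'. J_pi mu0 pol \<gamma> \<theta>' q) \<theta>
           + pgrad (\<lambda>\<theta>'. (\<Sum>sa\<in>UNIV. dvis mu0 P pol \<gamma> \<theta>' sa * (r $ sa - Psi P pol \<gamma> \<theta>' q $ sa))) \<theta>
       \<and> (J_obj mu0 P pol \<gamma> r has_derivative
            (\<lambda>h. stackelberg_grad mu0 P pol \<gamma> r \<theta> q \<bullet> h)) (at \<theta>)"
proof -
  interpret finite_mdp P mu0 \<gamma> pol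
    using assms by unfold_locales
  let ?J\<^sub>\<pi> = "\<lambda>\<theta>'. J_pi mu0 pol \<gamma> \<theta>' q"
  have J_obj: "J_obj mu0 P pol \<gamma> r = (\<lambda>\<theta>'. ?J\<^sub>\<pi> \<theta>' + mean_td_error r q \<theta>')"
    by (simp add: fun_eq_iff J_obj_eq_J_pi_plus_mean_td_error)
  have "stackelberg_grad mu0 P pol \<gamma> r \<theta> q = pgrad (J_obj mu0 P pol \<gamma> r) \<theta>"
    unfolding stackelberg_grad_eq J_obj
    by (simp add: pgrad_add J_pi_differentiable mean_td_error_differentiable)
  moreover have "J_obj mu0 P pol \<gamma> r differentiable (at \<theta>)"
    unfolding J_obj by (simp add: J_pi_differentiable mean_td_error_differentiable)
  ultimately show ?thesis
    using stackelberg_grad_eq has_derivative_pgrad by (simp add: mean_td_error_def[abs_def])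
qed

end
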